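(* Let $n\ge 1$ be an integer and let $x$ be a positive integer with $x\equiv 0\pmod{n!}$. Then $x+\frac{1}{n}$ is a cutoff.
   Context: For a real number $\alpha\ge 1$, define the integer sequence $(P^\alpha_i)_{i\ge 0}$ by $P^\alpha_0=0$, $P^\alpha_1=1$, and for $k\ge 1$, $P^\alpha_{k+1}=P^\alpha_k+P^\alpha_j$, where $j\ge1$ is the unique index with $\alpha P^\alpha_{j-1}<P^\alpha_k\le \alpha P^\alpha_j$. A cutoff is a real number $\alpha\ge 1$ such that for every real $\beta$ with $1\le\beta<\alpha$, the sequences $(P^\alpha_i)$ and $(P^\beta_i)$ are not identical. *)

theory Defs
  imports Complex_Main
begin

text \<open>The sequence (P^alpha_i): P 0 = 0, P 1 = 1, and for k >= 1,
  P (k+1) = P k + P j where j >= 1 is the unique index with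
  alpha * P (j-1) < P k <= alpha * P j.
  Plist alpha k is the list [P 0, ..., P (k+1)] (length k+2).  The index j
  is searched among 1..k, which always contains it (as P is nondecreasing
  and alpha >= 1, j = k satisfies P k <= alpha * P k).\<close>

fun Plist :: "real \<Rightarrow> nat \<Rightarrow> nat list" where
  "Plist \<alpha> 0 = [0, 1]"
| "Plist \<alpha> (Suc k) =
     (let ps = Plist \<alpha> k;
          Pk = ps ! Suc k;
          j = (THE j. 1 \<le> j \<and> j \<le> Suc k \<and>
                 \<alpha> * real (ps ! (j - 1)) < real Pk \<and> real Pk \<le> \<alpha> * real (ps ! j))
      in ps @ [Pk + ps ! j])"

definition Pseq :: "real \<Rightarrow> nat \<Rightarrow> nat" where
  "Pseq \<alpha> i = Plist \<alpha> i ! i"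

definition cutoff :: "real \<Rightarrow> bool" where
  "cutoff \<alpha> \<longleftrightarrow> 1 \<le> \<alpha> \<and> (\<forall>\<beta>. 1 \<le> \<beta> \<and> \<beta> < \<alpha> \<longrightarrow> Pseq \<alpha> \<noteq> Pseq \<beta>)"

lemma Pseq_0: "Pseq \<alpha> 0 = 0" by (simp add: Pseq_def)
lemma Pseq_1: "Pseq \<alpha> 1 = 1"
  by (simp add: Pseq_def Let_def nth_append)

end

(*
  For alpha = x + 1/n the sequence starts 0, 1, ..., x + 1 and then climbs in arithmetic
  progressions: while a term lies between m x + 1 and (m + 1) x the step index is m + 1, so
  the sequence advances by P (m + 1) = m + 1, and because m + 1 divides x it lands exactly
  on (m + 1) x + 1.  Hence the term n x + 1 = alpha * P n occurs.  A term P k equal to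
  alpha * P j forces the step index j at k; a smaller beta producing the same sequence
  would add the same increment P j there, hence use the same index j by strict
  monotonicity, and yet P k <= beta * P j < alpha * P j = P k.
*)
theory Submission
  imports Defs
begin

text \<open>Unlike the search in \<^const>\<open>Plist\<close>, this omits the bound \<open>j \<le> k\<close>; for
  \<open>\<alpha> \<ge> 1\<close> it follows from uniqueness (see the proof of \<open>Pseq_Suc_Suc\<close>).\<close>

definition is_step_index :: "real \<Rightarrow> (nat \<Rightarrow> nat) \<Rightarrow> nat \<Rightarrow> nat \<Rightarrow> bool" where
  "is_step_index \<alpha> P k j \<longleftrightarrow>
     1 \<le> j \<and> \<alpha> * real (P (j - 1)) < real (P k) \<and> real (P k) \<le> \<alpha> * real (P j)"

lemma step_index_unique:
  assumes "mono P" and "0 \<le> \<alpha>"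
    and "is_step_index \<alpha> P k j" and "is_step_index \<alpha> P k j'"
  shows "j = j'"
proof -
  have "\<not> j < j'" if "is_step_index \<alpha> P k j" and "is_step_index \<alpha> P k j'" for j j'
  proof
    assume "j < j'"
    then have "\<alpha> * real (P j) \<le> \<alpha> * real (P (j' - 1))"
      using assms(1,2) by (intro mult_left_mono) (simp_all add: monoD)
    with that show False by (auto simp: is_step_index_def)
  qed
  then show ?thesis using assms(3,4) by (metis linorder_neqE_nat)
qed

lemma step_index_exists:
  assumes "\<alpha> * real (P 0) < real (P k)" and "real (P k) \<le> \<alpha> * real (P m)"
  shows "\<exists>j\<le>m. is_step_index \<alpha> P k j"
  using assms(2)
proof (induction m)
  case 0
  with assms(1) show ?case by simp
next
  case (Suc m)
  show ?case
  proof (cases "real (P k) \<le> \<alpha> * real (P m)")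
    case True
    with Suc.IH show ?thesis using le_SucI by blast
  next
    case False
    with Suc.prems show ?thesis by (auto simp: is_step_index_def)
  qed
qed

lemma Pseq_Suc_0 [simp]: "Pseq \<alpha> (Suc 0) = 1"
  using Pseq_1 by simp

lemma Plist_length: "length (Plist \<alpha> k) = k + 2"
  by (induction k) (simp_all add: Let_def)

lemma nth_Plist_Suc: "i < k + 2 \<Longrightarrow> Plist \<alpha> (Suc k) ! i = Plist \<alpha> k ! i"
  by (simp add: Let_def nth_append Plist_length)

lemma nth_Plist: "i < k + 2 \<Longrightarrow> Plist \<alpha> k ! i = Pseq \<alpha> i"
proof (induction k arbitrary: i)
  case 0
  then show ?case using Pseq_0[of \<alpha>] by (auto simp: less_Suc_eq)
next
  case (Suc k)
  show ?case
  proof (cases "i < k + 2")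
    case True
    then have "Plist \<alpha> (Suc k) ! i = Plist \<alpha> k ! i" by (rule nth_Plist_Suc)
    with True Suc.IH show ?thesis by simp
  next
    case False
    with Suc.prems have "i = Suc (Suc k)" by simp
    then show ?thesis unfolding Pseq_def by (metis nth_Plist_Suc lessI add_2_eq_Suc')
  qed
qed

lemma Pseq_Suc_Suc_THE:
  "Pseq \<alpha> (Suc (Suc k)) =
     Pseq \<alpha> (Suc k) + Plist \<alpha> k ! (THE j. j \<le> Suc k \<and> is_step_index \<alpha> (Pseq \<alpha>) (Suc k) j)"
proof -
  have "(\<lambda>j. 1 \<le> j \<and> j \<le> Suc k \<and> \<alpha> * real (Plist \<alpha> k ! (j - 1)) < real (Plist \<alpha> k ! Suc k)
            \<and> real (Plist \<alpha> k ! Suc k) \<le> \<alpha> * real (Plist \<alpha> k ! j))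
        = (\<lambda>j. j \<le> Suc k \<and> is_step_index \<alpha> (Pseq \<alpha>) (Suc k) j)"
    by (auto simp: fun_eq_iff is_step_index_def nth_Plist)
  then show ?thesis
    by (simp add: Let_def nth_append Plist_length flip: nth_Plist[of "Suc (Suc k)" "Suc k"])
      (simp add: nth_Plist)
qed

lemma mono_Pseq: "mono (Pseq \<alpha>)"
  unfolding mono_iff_le_Suc
proof
  fix i
  show "Pseq \<alpha> i \<le> Pseq \<alpha> (Suc i)"
    by (cases i) (simp_all add: Pseq_0 Pseq_Suc_Suc_THE)
qed

lemma Pseq_pos: "0 < i \<Longrightarrow> 0 < Pseq \<alpha> i"
  using monoD[OF mono_Pseq, of 1 i \<alpha>] by simp

lemma Pseq_step_index_exists:
  assumes "1 \<le> \<alpha>"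
  shows "\<exists>j\<le>Suc k. is_step_index \<alpha> (Pseq \<alpha>) (Suc k) j"
proof (rule step_index_exists)
  show "\<alpha> * real (Pseq \<alpha> 0) < real (Pseq \<alpha> (Suc k))"
    using Pseq_pos[of "Suc k" \<alpha>] by (simp add: Pseq_0)
  show "real (Pseq \<alpha> (Suc k)) \<le> \<alpha> * real (Pseq \<alpha> (Suc k))"
    using assms by (simp add: mult_le_cancel_right1)
qed

lemma Pseq_Suc_Suc:
  assumes "1 \<le> \<alpha>" and "is_step_index \<alpha> (Pseq \<alpha>) (Suc k) j"
  shows "Pseq \<alpha> (Suc (Suc k)) = Pseq \<alpha> (Suc k) + Pseq \<alpha> j"
proof -
  obtain j0 where j0: "j0 \<le> Suc k" "is_step_index \<alpha> (Pseq \<alpha>) (Suc k) j0"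
    using Pseq_step_index_exists[OF assms(1)] by blast
  have unique: "j' = j0" if "is_step_index \<alpha> (Pseq \<alpha>) (Suc k) j'" for j'
    using step_index_unique[OF mono_Pseq _ that j0(2)] assms(1) by simp
  have "(THE j. j \<le> Suc k \<and> is_step_index \<alpha> (Pseq \<alpha>) (Suc k) j) = j0"
    by (rule the_equality) (use j0 unique in blast)+
  then have "Pseq \<alpha> (Suc (Suc k)) = Pseq \<alpha> (Suc k) + Plist \<alpha> k ! j0"
    by (simp only: Pseq_Suc_Suc_THE)
  also have "Plist \<alpha> k ! j0 = Pseq \<alpha> j"
    using j0(1) unique[OF assms(2)] by (simp add: nth_Plist)
  finally show ?thesis .
qed

lemma strict_mono_Pseq:
  assumes "1 \<le> \<alpha>"
  shows "strict_mono (Pseq \<alpha>)"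
  unfolding strict_mono_Suc_iff
proof
  fix i
  show "Pseq \<alpha> i < Pseq \<alpha> (Suc i)"
  proof (cases i)
    case 0
    then show ?thesis by (simp add: Pseq_0)
  next
    case (Suc k)
    obtain j where "is_step_index \<alpha> (Pseq \<alpha>) (Suc k) j"
      using Pseq_step_index_exists[OF assms] by blast
    with Suc Pseq_Suc_Suc[OF assms] Pseq_pos[of j \<alpha>] show ?thesis
      by (auto simp: is_step_index_def)
  qed
qed

lemma Pseq_eq_self:
  assumes "1 \<le> \<alpha>" and "real i \<le> \<alpha> + 1"
  shows "Pseq \<alpha> i = i"
  using assms(2)
proof (induction i rule: induct_nat_012)
  case 0
  show ?case by (simp add: Pseq_0)
next
  case 1
  show ?case by simp
next
  case (ge2 k)
  then have Pk: "Pseq \<alpha> (Suc k) = Suc k" by simp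
  with ge2.prems have "is_step_index \<alpha> (Pseq \<alpha>) (Suc k) 1"
    by (simp add: is_step_index_def Pseq_0)
  with Pk show ?case by (simp add: Pseq_Suc_Suc[OF assms(1)])
qed

lemma cutoff_if_Pseq_eq_mult:
  assumes "1 \<le> \<alpha>" and "0 < k" and "real (Pseq \<alpha> k) = \<alpha> * real (Pseq \<alpha> j)"
  shows "cutoff \<alpha>"
  unfolding cutoff_def
proof (intro conjI allI impI notI)
  show "1 \<le> \<alpha>" by fact
  fix \<beta> assume \<beta>: "1 \<le> \<beta> \<and> \<beta> < \<alpha>" and same: "Pseq \<alpha> = Pseq \<beta>"
  obtain k0 where k: "k = Suc k0" using assms(2) gr0_implies_Suc by blast
  have mono: "strict_mono (Pseq \<alpha>)" using strict_mono_Pseq[OF assms(1)] .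
  have Pj: "0 < Pseq \<alpha> j" using assms Pseq_pos[of k \<alpha>] by (auto intro: gr0I)
  then have "0 < j" by (auto simp: Pseq_0 intro: gr0I)
  then have "Pseq \<alpha> (j - 1) < Pseq \<alpha> j" using mono by (simp add: strict_mono_less)
  with assms(1,3) \<open>0 < j\<close> have "is_step_index \<alpha> (Pseq \<alpha>) k j"
    by (simp add: is_step_index_def)
  moreover obtain i where step_\<beta>: "is_step_index \<beta> (Pseq \<alpha>) k i"
    using Pseq_step_index_exists[of \<beta> k0] \<beta> same k by auto
  ultimately have "Pseq \<alpha> j = Pseq \<alpha> i"
    using Pseq_Suc_Suc[OF assms(1)] Pseq_Suc_Suc[of \<beta> k0 i] \<beta> same k by simp
  then have "i = j" using mono by (simp add: strict_mono_eq)
  with step_\<beta> have "real (Pseq \<alpha> k) \<le> \<beta> * real (Pseq \<alpha> j)"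
    by (simp add: is_step_index_def)
  also have "\<dots> < \<alpha> * real (Pseq \<alpha> j)" using \<beta> Pj by simp
  finally show False using assms(3) by simp
qed

context
  fixes n x :: nat and \<alpha> :: real
  assumes n_pos: "1 \<le> n" and x_pos: "0 < x" and fact_dvd: "fact n dvd x"
    and \<alpha>_def: "\<alpha> = real x + 1 / real n"
begin

lemma one_le_\<alpha>: "1 \<le> \<alpha>"
  using x_pos by (simp add: \<alpha>_def add_increasing2)

lemma n_le_x: "n \<le> x"
  using fact_ge_self[of n] dvd_imp_le[OF fact_dvd x_pos] by linarith

lemma Pseq_eq_self_le:
  assumes "i \<le> Suc x"
  shows "Pseq \<alpha> i = i"
proof (rule Pseq_eq_self[OF one_le_\<alpha>])
  have "0 \<le> 1 / real n" by simp
  with assms show "real i \<le> \<alpha> + 1" unfolding \<alpha>_def by linarith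
qed

lemma step_index_between_multiples:
  assumes "m < n" and "m * x + 1 \<le> Pseq \<alpha> k" and "Pseq \<alpha> k \<le> Suc m * x"
  shows "is_step_index \<alpha> (Pseq \<alpha>) k (Suc m)"
proof -
  have Pm: "Pseq \<alpha> m = m" and PSm: "Pseq \<alpha> (Suc m) = Suc m"
    using assms(1) n_le_x by (simp_all add: Pseq_eq_self_le)
  have "\<alpha> * m = real (m * x) + real m / real n" by (simp add: \<alpha>_def algebra_simps)
  also have "\<dots> < real (m * x) + 1" using assms(1) by simp
  also have "\<dots> \<le> real (Pseq \<alpha> k)" using assms(2) by linarith
  finally have lower: "\<alpha> * real (Pseq \<alpha> m) < real (Pseq \<alpha> k)" using Pm by simp
  have "real (Pseq \<alpha> k) \<le> real x * real (Suc m)"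
    using assms(3) by (metis mult.commute of_nat_le_iff of_nat_mult)
  also have "\<dots> \<le> \<alpha> * real (Suc m)" by (simp add: \<alpha>_def mult_right_mono)
  finally show ?thesis using lower PSm by (simp add: is_step_index_def)
qed

lemma Pseq_arith_progression:
  assumes "m < n" and "0 < k" and "Pseq \<alpha> k = m * x + 1" and "Suc m * t \<le> x"
  shows "Pseq \<alpha> (k + t) = m * x + 1 + Suc m * t"
  using assms(4)
proof (induction t)
  case 0
  with assms(3) show ?case by simp
next
  case (Suc t)
  then have IH: "Pseq \<alpha> (k + t) = m * x + 1 + Suc m * t" by simp
  moreover have "Suc m * t + Suc m \<le> x" using Suc.prems by simp
  ultimately have "is_step_index \<alpha> (Pseq \<alpha>) (k + t) (Suc m)"
    using assms(1) by (intro step_index_between_multiples) (simp_all add: algebra_simps)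
  moreover obtain k0 where "k + t = Suc k0" using assms(2) by (metis add_gr_0 gr0_implies_Suc)
  moreover have "Pseq \<alpha> (Suc m) = Suc m" using assms(1) n_le_x by (simp add: Pseq_eq_self_le)
  ultimately show ?case using IH Pseq_Suc_Suc[OF one_le_\<alpha>] by simp
qed

lemma Pseq_reaches_multiple: "m \<le> n \<Longrightarrow> \<exists>k>0. Pseq \<alpha> k = m * x + 1"
proof (induction m)
  case 0
  show ?case using Pseq_Suc_0 by (intro exI[of _ 1]) simp
next
  case (Suc m)
  then obtain k where "0 < k" and Pk: "Pseq \<alpha> k = m * x + 1" by auto
  have "Suc m dvd fact n" using Suc.prems by (intro dvd_fact) simp_all
  then obtain q where q: "x = Suc m * q" using fact_dvd dvd_trans by blast
  have "Pseq \<alpha> (k + q) = m * x + 1 + Suc m * q"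
    using Suc.prems \<open>0 < k\<close> Pk q by (intro Pseq_arith_progression) simp_all
  with q \<open>0 < k\<close> show ?case by (intro exI[of _ "k + q"]) simp
qed

end

theorem mainTheorem11:
  fixes n x :: nat
  assumes "n \<ge> 1" and "x > 0" and "fact n dvd x"
  shows "cutoff (real x + 1 / real n)"
proof -
  define \<alpha> where "\<alpha> = real x + 1 / real n"
  obtain k where "0 < k" and Pk: "Pseq \<alpha> k = n * x + 1"
    using Pseq_reaches_multiple[OF assms \<alpha>_def order.refl] by blast
  have "Pseq \<alpha> n = n"
    using Pseq_eq_self_le[OF assms \<alpha>_def] n_le_x[OF assms] by simp
  with Pk assms(1) have "real (Pseq \<alpha> k) = \<alpha> * real (Pseq \<alpha> n)"
    by (simp add: \<alpha>_def field_simps)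
  with one_le_\<alpha>[OF assms \<alpha>_def] \<open>0 < k\<close> show ?thesis
    unfolding \<alpha>_def by (rule cutoff_if_Pseq_eq_mult)
qed

end
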